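(* Let $r,s,t,\ell,m$ be integers with $1 \le t \le \ell \le m$, $1 \le r \le \ell$ and $1 \le s \le t$. Then $$|\mathfrak{D}_{t}(\ell,m;r,s)|=\frac{[m]_q!}{[m-t]_q!}\,q^{s(\ell-r)}\,q^{\binom{s}{2}}\,q^{\binom{t-s}{2}}\,{r\brack s}_q {\ell-r\brack t-s}_q.$$
   Context: $q$ is a prime power. For an $\ell\times m$ matrix $M$ over $\mathbb{F}_q$ and $1\le r\le\ell$, $\underline{M}_r$ denotes the $r\times m$ matrix formed by the first $r$ rows of $M$. $\mathfrak{D}_{t}(\ell,m;r,s)$ is the set of $\ell\times m$ matrices $M$ over $\mathbb{F}_q$ with $\mathrm{rk}(M)=t$ and $\mathrm{rk}(\underline{M}_r)=s$. The Gaussian factorial is $[n]_q!=\prod_{i=1}^n(q^i-1)$ (with $[0]_q!=1$), and ${n\brack k}_q$ denotes the Gaussian binomial coefficient (number of $k$-dimensional subspaces of $\mathbb{F}_q^n$), which is $0$ if $k<0$ or $k>n$. *)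

theory Defs
  imports "Jordan_Normal_Form.DL_Rank"
begin

definition mrank :: "'a::field mat \<Rightarrow> nat" where
  "mrank A = vec_space.rank (dim_row A) A"

definition first_rows :: "nat \<Rightarrow> 'a mat \<Rightarrow> 'a mat" where
  "first_rows r M = mat r (dim_col M) (\<lambda>(i,j). M $$ (i,j))"

definition Dset :: "nat \<Rightarrow> nat \<Rightarrow> nat \<Rightarrow> nat \<Rightarrow> nat \<Rightarrow> 'a::{finite,field} mat set" where
  "Dset t l m r s = {M \<in> carrier_mat l m. mrank M = t \<and> mrank (first_rows r M) = s}"

definition qfact :: "nat \<Rightarrow> nat \<Rightarrow> real" where
  "qfact q n = (\<Prod>i=1..n. (real q ^ i - 1))"

definition qbinom :: "nat \<Rightarrow> nat \<Rightarrow> nat \<Rightarrow> real" where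
  "qbinom q n k = (if k \<le> n then qfact q n / (qfact q k * qfact q (n - k)) else 0)"

end

theory Submission
  imports Defs
begin

text \<open>
  Induction on the number \<open>j\<close> of columns. Over \<open>\<bbbF>\<^sub>q\<close> the column space of a matrix of
  rank \<open>a\<close> has \<open>q\<^sup>a\<close> elements, so appending a column \<open>v\<close> to an \<open>l \<times> j\<close> matrix \<open>A\<close> raises the
  rank iff \<open>v\<close> lies outside the column space \<open>C\<close> of \<open>A\<close>, and raises the rank of the first \<open>r\<close>
  rows iff the top part of \<open>v\<close> lies outside the projection of \<open>C\<close>. If \<open>A\<close> has ranks \<open>(a, b)\<close>,
  the three resulting classes of columns have \<open>q\<^sup>a\<close>, \<open>q\<^sup>b\<^sup>+\<^sup>n - q\<^sup>a\<close> and \<open>q\<^sup>l - q\<^sup>b\<^sup>+\<^sup>n\<close> elements,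
  where \<open>n = l - r\<close>. This gives a three-term recursion in \<open>j\<close>, solved by
  \<open>\<Prod>\<^sub>i\<^sub><\<^sub>a (q\<^sup>j - q\<^sup>i) \<cdot> q\<^sup>b\<^sup>(\<^sup>n\<^sup>-\<^sup>a\<^sup>+\<^sup>b\<^sup>) [r,b]\<^sub>q [n,a-b]\<^sub>q\<close>; checking the recursion for the second factor
  reduces to the Pascal-type identity \<open>q\<^sup>k (q\<^sup>k\<^sup>+\<^sup>1 - 1) [n,k+1]\<^sub>q = (q\<^sup>n - q\<^sup>k) [n,k]\<^sub>q\<close>.
\<close>

section \<open>Column spaces over a finite field\<close>

lemma card_UNIV_field_ge_2: "2 \<le> card (UNIV :: 'a::{finite,field} set)"
  using card_mono[of "UNIV :: 'a set" "{0, 1}"] by simp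

lemma bij_betw_carrier_vec_PiE:
  "bij_betw (\<lambda>v. restrict (($) v) {0..<n}) (carrier_vec n) ({0..<n} \<rightarrow>\<^sub>E (UNIV :: 'a set))"
  by (rule bij_betw_byWitness[where f'="\<lambda>f. vec n f"])
    (auto intro!: eq_vecI simp: PiE_def extensional_def fun_eq_iff)

lemma finite_carrier_vec [simp]: "finite (carrier_vec n :: 'a::finite vec set)"
  using bij_betw_finite[OF bij_betw_carrier_vec_PiE[where 'a='a]] by (simp add: finite_PiE)

lemma card_carrier_vec: "card (carrier_vec n :: 'a::finite vec set) = card (UNIV :: 'a set) ^ n"
  using bij_betw_same_card[OF bij_betw_carrier_vec_PiE[where 'a='a]] by (simp add: card_PiE)

context vec_space
begin

lemma bij_betw_lincomb_span:
  assumes fin: "finite B" and B: "B \<subseteq> carrier_vec n" and li: "lin_indpt B"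
  shows "bij_betw (\<lambda>a. lincomb a B) (B \<rightarrow>\<^sub>E (UNIV :: 'a set)) (span B)"
proof (rule bij_betwI')
  fix a b assume a: "a \<in> B \<rightarrow>\<^sub>E (UNIV :: 'a set)" and b: "b \<in> B \<rightarrow>\<^sub>E (UNIV :: 'a set)"
  show "lincomb a B = lincomb b B \<longleftrightarrow> a = b"
  proof
    assume eq: "lincomb a B = lincomb b B"
    have "lincomb (\<lambda>v. a v - b v) B = lincomb a B \<ominus>\<^bsub>V\<^esub> lincomb b B"
      by (rule lincomb_diff[OF fin B])
    also have "\<dots> = 0\<^sub>v n"
      unfolding eq using lincomb_closed[OF B, of b] by (simp add: M.minus_eq M.r_neg)
    finally have zero: "lincomb (\<lambda>v. a v - b v) B = 0\<^sub>v n" .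
    have "a v = b v" if v: "v \<in> B" for v
    proof (rule ccontr)
      assume "a v \<noteq> b v"
      then have "lin_dep B"
        by (intro lin_dep_crit[OF fin subset_refl _ v _ zero]) auto
      with li show False by simp
    qed
    then show "a = b" using a b by (auto intro: PiE_ext)
  qed simp
next
  fix a assume "a \<in> B \<rightarrow>\<^sub>E (UNIV :: 'a set)"
  then show "lincomb a B \<in> span B" by (auto simp: finite_span[OF fin B])
next
  fix v assume "v \<in> span B"
  then obtain a where "lincomb a B = v" using finite_in_span[OF fin B] by blast
  then show "\<exists>a\<in>B \<rightarrow>\<^sub>E UNIV. v = lincomb a B"
    using B by (intro bexI[of _ "restrict a B"]) (auto intro: lincomb_cong)
qed

lemma card_span_lin_indpt:
  assumes "finite B" "B \<subseteq> carrier_vec n" "lin_indpt B"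
  shows "card (span B) = card (UNIV :: 'a set) ^ card B"
  using bij_betw_same_card[OF bij_betw_lincomb_span[OF assms]] assms(1)
  by (simp add: card_PiE)

lemma exists_basis_of_span:
  assumes fin: "finite S" and S: "S \<subseteq> carrier_vec n"
  obtains B where "finite B" "B \<subseteq> carrier_vec n" "lin_indpt B" "span B = span S"
    "vectorspace.dim class_ring (span_vs S) = card B"
proof -
  have vs: "vectorspace class_ring (span_vs S)"
    using S span_is_subspace subspace_def subspace_is_vs by simp
  obtain B where B: "finite B" "vectorspace.basis class_ring (span_vs S) B"
    using vectorspace.finite_basis_exists[OF vs] fin_dim_span[OF fin] S by auto
  have sub: "submodule class_ring (span S) V" using S span_is_submodule by simp
  have BS: "B \<subseteq> span S" using B(2) unfolding vectorspace.basis_def[OF vs] by simp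
  have "B \<subseteq> carrier_vec n" using BS S span_is_subset2 by auto
  moreover have "lin_indpt B" "span B = span S"
    using B(2) unfolding vectorspace.basis_def[OF vs] span_li_not_depend[OF BS sub] by simp_all
  ultimately show thesis using that B(1) vectorspace.dim_basis[OF vs B] by blast
qed

end

text \<open>Unlike \<open>vec_space.col_space\<close>, this column space does not depend on a locale parameter
  fixing the number of rows.\<close>
definition col_image :: "'a::field mat \<Rightarrow> 'a vec set" where
  "col_image A = (\<lambda>x. A *\<^sub>v x) ` carrier_vec (dim_col A)"

lemma card_col_image:
  fixes A :: "'a::{finite,field} mat"
  shows "card (col_image A) = card (UNIV :: 'a set) ^ mrank A"
proof -
  interpret vec_space "TYPE('a)" "dim_row A" .
  have A: "A \<in> carrier_mat (dim_row A) (dim_col A)" by simp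
  have S: "set (cols A) \<subseteq> carrier_vec (dim_row A)" using cols_dim by blast
  obtain B where B: "finite B" "B \<subseteq> carrier_vec (dim_row A)" "lin_indpt B"
      "span B = span (set (cols A))" "rank A = card B"
    using exists_basis_of_span[OF _ S] unfolding rank_def by blast
  have "col_image A = col_space A"
    unfolding col_space_eq[OF A] col_image_def by (auto intro!: carrier_vecI)
  also have "\<dots> = span B" unfolding col_space_def B(4) ..
  finally show ?thesis
    using card_span_lin_indpt[OF B(1-3)] by (simp add: mrank_def B(5))
qed

lemma col_image_carrier: "col_image A \<subseteq> carrier_vec (dim_row A)"
  by (auto simp: col_image_def intro!: carrier_vecI)

lemma col_image_add:
  assumes "y \<in> col_image A" "z \<in> col_image A"
  shows "y + z \<in> col_image A"
proof -
  obtain x x' where x: "x \<in> carrier_vec (dim_col A)" "x' \<in> carrier_vec (dim_col A)"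
    and yz: "y = A *\<^sub>v x" "z = A *\<^sub>v x'"
    using assms by (auto simp: col_image_def)
  have "y + z = A *\<^sub>v (x + x')"
    unfolding yz by (rule mult_add_distrib_mat_vec[symmetric, OF carrier_matI[OF refl refl] x])
  then show ?thesis using x by (auto simp: col_image_def)
qed

lemma col_image_smult:
  assumes "y \<in> col_image A"
  shows "c \<cdot>\<^sub>v y \<in> col_image A"
proof -
  obtain x where x: "x \<in> carrier_vec (dim_col A)" and y: "y = A *\<^sub>v x"
    using assms by (auto simp: col_image_def)
  have "c \<cdot>\<^sub>v y = A *\<^sub>v (c \<cdot>\<^sub>v x)"
    unfolding y by (rule mult_mat_vec[symmetric, OF carrier_matI[OF refl refl] x])
  then show ?thesis using x by (auto simp: col_image_def)
qed

lemma card_extend_subspace: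
  fixes C :: "'a::{finite,field} vec set"
  assumes C: "C \<subseteq> carrier_vec n" and add: "\<And>x y. x \<in> C \<Longrightarrow> y \<in> C \<Longrightarrow> x + y \<in> C"
    and smult: "\<And>c x. x \<in> C \<Longrightarrow> c \<cdot>\<^sub>v x \<in> C" and v: "v \<in> carrier_vec n"
  shows "card {y + c \<cdot>\<^sub>v v | y c. y \<in> C} = (if v \<in> C then card C else card (UNIV :: 'a set) * card C)"
proof (cases "v \<in> C")
  case True
  have "{y + c \<cdot>\<^sub>v v | y c. y \<in> C} = C"
  proof safe
    fix y assume y: "y \<in> C"
    then have "y = y + 0 \<cdot>\<^sub>v v" using C v by (intro eq_vecI) auto
    then show "\<exists>y' c. y = y' + c \<cdot>\<^sub>v v \<and> y' \<in> C" using y by blast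
  qed (use True add smult in blast)
  then show ?thesis using True by simp
next
  case False
  have "inj_on (\<lambda>(y, c). y + c \<cdot>\<^sub>v v) (C \<times> UNIV)"
  proof (rule inj_onI, clarify)
    fix y c y' c' assume y: "y \<in> C" "y' \<in> C" and eq: "y + c \<cdot>\<^sub>v v = y' + c' \<cdot>\<^sub>v v"
    have dim: "y \<in> carrier_vec n" "y' \<in> carrier_vec n" using y C by auto
    have comp: "y $ i + c * v $ i = y' $ i + c' * v $ i" if "i < n" for i
      using arg_cong[OF eq, of "\<lambda>w. w $ i"] that dim v by simp
    show "y = y' \<and> c = c'"
    proof (cases "c = c'")
      case True
      then show ?thesis using comp dim by (auto intro!: eq_vecI)
    next
      case False
      have "v = (1 / (c - c')) \<cdot>\<^sub>v (y' + (-1) \<cdot>\<^sub>v y)"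
      proof (rule eq_vecI)
        fix i assume "i < dim_vec ((1 / (c - c')) \<cdot>\<^sub>v (y' + (-1) \<cdot>\<^sub>v y))"
        then have i: "i < n" using dim by simp
        have "(c - c') * v $ i = y' $ i - y $ i" using comp[OF i] by (simp add: algebra_simps)
        then show "v $ i = ((1 / (c - c')) \<cdot>\<^sub>v (y' + (-1) \<cdot>\<^sub>v y)) $ i"
          using i dim False by (simp add: field_simps)
      qed (use dim v in simp)
      moreover have "(1 / (c - c')) \<cdot>\<^sub>v (y' + (-1) \<cdot>\<^sub>v y) \<in> C" using y add smult by blast
      ultimately show ?thesis using \<open>v \<notin> C\<close> by simp
    qed
  qed
  moreover have "{y + c \<cdot>\<^sub>v v | y c. y \<in> C} = (\<lambda>(y, c). y + c \<cdot>\<^sub>v v) ` (C \<times> UNIV)" by auto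
  moreover have "finite C" using C by (rule finite_subset) simp
  ultimately show ?thesis using False by (simp add: card_image card_cartesian_product)
qed

section \<open>Appending a column\<close>

definition append_col :: "'a mat \<Rightarrow> 'a vec \<Rightarrow> 'a mat" where
  "append_col A v = mat (dim_row A) (Suc (dim_col A))
     (\<lambda>(i, k). if k < dim_col A then A $$ (i, k) else v $ i)"

lemma append_col_carrier [simp]: "append_col A v \<in> carrier_mat (dim_row A) (Suc (dim_col A))"
  by (simp add: append_col_def)

lemma bij_betw_append_col:
  "bij_betw (\<lambda>(A, v). append_col A v) (carrier_mat l k \<times> carrier_vec l) (carrier_mat l (Suc k))"
proof (rule bij_betw_byWitness[where f'="\<lambda>M. (mat l k (\<lambda>ij. M $$ ij), col M k)"])
  show "\<forall>Av \<in> carrier_mat l k \<times> carrier_vec l.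
      (\<lambda>M. (mat l k (\<lambda>ij. M $$ ij), col M k)) ((\<lambda>(A, v). append_col A v) Av) = Av"
    by (auto intro!: eq_matI eq_vecI simp: append_col_def)
  show "\<forall>M \<in> carrier_mat l (Suc k). (\<lambda>(A, v). append_col A v) (mat l k (\<lambda>ij. M $$ ij), col M k) = M"
    by (auto intro!: eq_matI simp: append_col_def less_Suc_eq)
qed (use append_col_carrier in fastforce)+

lemma finite_carrier_mat [simp]: "finite (carrier_mat l k :: 'a::finite mat set)"
proof (induction k)
  case 0
  have "carrier_mat l 0 \<subseteq> {mat l 0 (\<lambda>_. undefined) :: 'a mat}" by (auto intro!: eq_matI)
  then show ?case using finite_subset by blast
next
  case (Suc k)
  then show ?case using bij_betw_finite[OF bij_betw_append_col[where 'a='a and l=l and k=k]] by simp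
qed

lemma mult_append_col:
  fixes A :: "'a::comm_ring mat"
  assumes A: "A \<in> carrier_mat n k" and v: "v \<in> carrier_vec n" and x: "x \<in> carrier_vec (Suc k)"
  shows "append_col A v *\<^sub>v x = A *\<^sub>v vec_first x k + x $ k \<cdot>\<^sub>v v"
proof (rule eq_vecI)
  fix i assume "i < dim_vec (A *\<^sub>v vec_first x k + x $ k \<cdot>\<^sub>v v)"
  then have i: "i < n" using v by simp
  have "(append_col A v *\<^sub>v x) $ i = (\<Sum>j\<in>{0..<Suc k}. append_col A v $$ (i, j) * x $ j)"
    using A x i by (simp add: append_col_def scalar_prod_def)
  also have "\<dots> = (\<Sum>j\<in>{0..<k}. A $$ (i, j) * x $ j) + v $ i * x $ k"
    using A i by (simp add: append_col_def)
  also have "\<dots> = (A *\<^sub>v vec_first x k + x $ k \<cdot>\<^sub>v v) $ i"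
    using A v i by (simp add: scalar_prod_def vec_first_def mult.commute)
  finally show "(append_col A v *\<^sub>v x) $ i = (A *\<^sub>v vec_first x k + x $ k \<cdot>\<^sub>v v) $ i" .
qed (use A v in \<open>simp add: append_col_def\<close>)

lemma col_image_append_col:
  assumes A: "A \<in> carrier_mat n k" and v: "v \<in> carrier_vec n"
  shows "col_image (append_col A v) = {y + c \<cdot>\<^sub>v v | y c. y \<in> col_image A}"
proof -
  have "col_image (append_col A v) = (\<lambda>x. append_col A v *\<^sub>v x) ` carrier_vec (Suc k)"
    using A by (simp add: col_image_def append_col_def)
  also have "\<dots> = {y + c \<cdot>\<^sub>v v | y c. y \<in> col_image A}"
  proof safe
    fix x :: "'a vec" assume x: "x \<in> carrier_vec (Suc k)"
    show "\<exists>y c. append_col A v *\<^sub>v x = y + c \<cdot>\<^sub>v v \<and> y \<in> col_image A"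
      using A by (intro exI[of _ "A *\<^sub>v vec_first x k"] exI[of _ "x $ k"])
        (auto simp: mult_append_col[OF A v x] col_image_def)
  next
    fix y c assume "y \<in> col_image A"
    then obtain x where x: "x \<in> carrier_vec k" and y: "y = A *\<^sub>v x"
      using A by (auto simp: col_image_def)
    let ?x = "x @\<^sub>v vec 1 (\<lambda>_. c)"
    have "?x \<in> carrier_vec (Suc k)" using x by (intro carrier_vecI) simp
    moreover have "vec_first ?x k = x" "?x $ k = c" using x by (auto simp: vec_first_def)
    ultimately
    show "y + c \<cdot>\<^sub>v v \<in> (\<lambda>x. append_col A v *\<^sub>v x) ` carrier_vec (Suc k)"
      unfolding y by (auto intro!: image_eqI[of _ _ ?x] simp: mult_append_col[OF A v])
  qed
  finally show ?thesis .
qed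

lemma mrank_append_col:
  fixes A :: "'a::{finite,field} mat"
  assumes A: "A \<in> carrier_mat n k" and v: "v \<in> carrier_vec n"
  shows "mrank (append_col A v) = (if v \<in> col_image A then mrank A else Suc (mrank A))"
proof -
  have "card (UNIV :: 'a set) ^ mrank (append_col A v) = card (col_image (append_col A v))"
    by (simp add: card_col_image)
  also have "\<dots> = (if v \<in> col_image A then card (col_image A) else card (UNIV :: 'a set) * card (col_image A))"
    unfolding col_image_append_col[OF A v]
    by (rule card_extend_subspace[OF _ col_image_add col_image_smult v])
      (use A col_image_carrier in blast)
  also have "\<dots> = card (UNIV :: 'a set) ^ (if v \<in> col_image A then mrank A else Suc (mrank A))"
    by (simp add: card_col_image)
  finally show ?thesis
    using card_UNIV_field_ge_2[where 'a='a] by (simp add: power_inject_exp)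
qed

lemma first_rows_append_col:
  "r \<le> dim_row A \<Longrightarrow> first_rows r (append_col A v) = append_col (first_rows r A) (vec_first v r)"
  by (auto simp: first_rows_def append_col_def vec_first_def intro!: eq_matI)

lemma col_image_first_rows:
  assumes r: "r \<le> dim_row A"
  shows "col_image (first_rows r A) = (\<lambda>y. vec_first y r) ` col_image A"
proof -
  have "first_rows r A *\<^sub>v x = vec_first (A *\<^sub>v x) r" if "x \<in> carrier_vec (dim_col A)" for x
    using r that by (auto simp: first_rows_def vec_first_def scalar_prod_def intro!: eq_vecI)
  then show ?thesis
    unfolding col_image_def image_image by (auto simp: first_rows_def intro!: image_cong)
qed

section \<open>The recursion in the number of columns\<close>

lemma card_vec_first_preimage:
  fixes P :: "'a::finite vec set"
  assumes P: "P \<subseteq> carrier_vec r" and r: "r \<le> l"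
  shows "card {v \<in> carrier_vec l. vec_first v r \<in> P} = card P * card (UNIV :: 'a set) ^ (l - r)"
proof -
  define n where "n = l - r"
  have l: "l = r + n" using r by (simp add: n_def)
  have "inj_on (\<lambda>(x, y). x @\<^sub>v (y :: 'a vec)) (P \<times> carrier_vec n)"
  proof (rule inj_onI, clarify)
    fix x y x' y' :: "'a vec" assume "x \<in> P" "x' \<in> P" "x @\<^sub>v y = x' @\<^sub>v y'"
    moreover have "x \<in> carrier_vec r" "x' \<in> carrier_vec r" using P calculation by auto
    ultimately show "x = x' \<and> y = y'" using append_vec_eq by metis
  qed
  moreover have "{v \<in> carrier_vec l. vec_first v r \<in> P} = (\<lambda>(x, y). x @\<^sub>v (y :: 'a vec)) ` (P \<times> carrier_vec n)"
  proof safe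
    fix v :: "'a vec" assume "v \<in> carrier_vec l" "vec_first v r \<in> P"
    then show "v \<in> (\<lambda>(x, y). x @\<^sub>v (y :: 'a vec)) ` (P \<times> carrier_vec n)"
      unfolding l by (intro image_eqI[of _ _ "(vec_first v r, vec_last v n)"]) auto
  next
    fix x y :: "'a vec" assume "x \<in> P" "y \<in> carrier_vec n"
    moreover have "vec_first (x @\<^sub>v y) r = x" if "x \<in> carrier_vec r" for x
      using that by (auto simp: vec_first_def)
    ultimately show "x @\<^sub>v y \<in> carrier_vec l" "vec_first (x @\<^sub>v y) r \<in> P"
      using P unfolding l by auto
  qed
  moreover have "finite P" using finite_subset[OF P] by simp
  ultimately show ?thesis
    by (simp add: card_image card_cartesian_product card_carrier_vec n_def)
qed

text \<open>The number of columns turning a matrix of rank \<open>a'\<close> whose first \<open>r\<close> rows have rank \<open>b'\<close>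
  into one with ranks \<open>a\<close> and \<open>b\<close>; the summands count the three classes of columns.\<close>
definition rank_step :: "real \<Rightarrow> nat \<Rightarrow> nat \<Rightarrow> nat \<Rightarrow> nat \<Rightarrow> nat \<Rightarrow> nat \<Rightarrow> real" where
  "rank_step q l r a' b' a b =
     (if a' = a \<and> b' = b then q ^ a' else 0)
   + (if Suc a' = a \<and> b' = b then q ^ b' * q ^ (l - r) - q ^ a' else 0)
   + (if Suc a' = a \<and> Suc b' = b then q ^ l - q ^ b' * q ^ (l - r) else 0)"

lemma card_append_col_ranks:
  fixes A :: "'a::{finite,field} mat"
  assumes A: "A \<in> carrier_mat l k" and r: "r \<le> l"
  shows "real (card {v \<in> carrier_vec l.
      mrank (append_col A v) = a \<and> mrank (first_rows r (append_col A v)) = b})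
    = rank_step (card (UNIV :: 'a set)) l r (mrank A) (mrank (first_rows r A)) a b"
proof -
  let ?q = "real (card (UNIV :: 'a set))"
  define a' b' where "a' = mrank A" and "b' = mrank (first_rows r A)"
  define C where "C = col_image A"
  define Q where "Q = {v \<in> carrier_vec l. vec_first v r \<in> col_image (first_rows r A)}"
  define V where "V = {v \<in> carrier_vec l.
    mrank (append_col A v) = a \<and> mrank (first_rows r (append_col A v)) = b}"
  have CQ: "C \<subseteq> Q"
    using col_image_carrier[of A] col_image_first_rows[of r A] A r by (auto simp: C_def Q_def)
  have Q: "Q \<subseteq> carrier_vec l" by (auto simp: Q_def)
  have fin: "finite Q" "finite C" using finite_subset[OF Q] finite_subset[OF CQ] by auto
  have top: "first_rows r A \<in> carrier_mat r k" using A by (simp add: first_rows_def)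
  have ranks: "mrank (append_col A v) = (if v \<in> C then a' else Suc a')"
    "mrank (first_rows r (append_col A v)) = (if v \<in> Q then b' else Suc b')"
    if "v \<in> carrier_vec l" for v
    using mrank_append_col[OF A that] mrank_append_col[OF top vec_first_carrier]
      first_rows_append_col[of r A v] A r that
    by (auto simp: a'_def b'_def C_def Q_def)
  have "V = {v \<in> carrier_vec l. (if v \<in> C then a' else Suc a') = a \<and> (if v \<in> Q then b' else Suc b') = b}"
    unfolding V_def by (auto simp: ranks)
  then have V: "V = (if a' = a \<and> b' = b then C else {})
      \<union> (if Suc a' = a \<and> b' = b then Q - C else {})
      \<union> (if Suc a' = a \<and> Suc b' = b then carrier_vec l - Q else {})"
    using CQ Q by auto
  have cardC: "real (card C) = ?q ^ a'" by (simp add: C_def a'_def card_col_image)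
  have cardQ: "real (card Q) = ?q ^ b' * ?q ^ (l - r)"
    using card_vec_first_preimage[OF _ r, of "col_image (first_rows r A)"]
      col_image_carrier[of "first_rows r A"]
    by (simp add: Q_def b'_def card_col_image first_rows_def)
  have "real (card (Q - C)) = ?q ^ b' * ?q ^ (l - r) - ?q ^ a'"
    using card_Diff_subset[OF fin(2) CQ] card_mono[OF fin(1) CQ] cardC cardQ by (simp add: of_nat_diff)
  moreover have "real (card (carrier_vec l - Q)) = ?q ^ l - ?q ^ b' * ?q ^ (l - r)"
    using card_Diff_subset[OF fin(1) Q] card_mono[OF _ Q] cardQ by (simp add: of_nat_diff card_carrier_vec)
  moreover have "card V = (if a' = a \<and> b' = b then card C else 0)
      + (if Suc a' = a \<and> b' = b then card (Q - C) else 0)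
      + (if Suc a' = a \<and> Suc b' = b then card (carrier_vec l - Q) else 0)"
    unfolding V using fin CQ by (auto simp: card_Un_disjoint)
  ultimately have "real (card V) = rank_step ?q l r a' b' a b"
    unfolding rank_step_def using cardC by simp
  then show ?thesis by (simp add: V_def a'_def b'_def)
qed

lemma card_Dset_Suc_sum:
  assumes r: "r \<le> l"
  shows "real (card (Dset a l (Suc k) r b :: 'a::{finite,field} mat set))
    = (\<Sum>A\<in>(carrier_mat l k :: 'a mat set).
        rank_step (card (UNIV :: 'a set)) l r (mrank A) (mrank (first_rows r A)) a b)"
proof -
  let ?S = "carrier_mat l k :: 'a mat set"
  let ?f = "\<lambda>(A, v). append_col A v"
  define V where "V A = {v \<in> carrier_vec l.
    mrank (append_col A v) = a \<and> mrank (first_rows r (append_col A v)) = b}" for A :: "'a mat"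
  have bij: "bij_betw ?f (?S \<times> carrier_vec l) (carrier_mat l (Suc k))"
    by (rule bij_betw_append_col)
  have "Dset a l (Suc k) r b = ?f ` Sigma ?S V"
    unfolding Dset_def V_def bij_betw_imp_surj_on[OF bij, symmetric] by auto
  moreover have "inj_on ?f (Sigma ?S V)"
    by (rule inj_on_subset[OF bij_betw_imp_inj_on[OF bij]]) (auto simp: V_def)
  ultimately have "card (Dset a l (Suc k) r b :: 'a mat set) = (\<Sum>A\<in>?S. card (V A))"
    by (simp add: card_image card_SigmaI V_def)
  then show ?thesis
    by (simp add: V_def card_append_col_ranks[OF _ r] cong: sum.cong)
qed

lemma sum_Dset_profile:
  "(\<Sum>A\<in>(carrier_mat l k :: 'a mat set). if P \<and> mrank A = a \<and> mrank (first_rows r A) = b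
       then f (mrank A) (mrank (first_rows r A)) else 0)
    = (if P then f a b * real (card (Dset a l k r b :: 'a::{finite,field} mat set)) else 0)"
proof (cases P)
  case True
  have "(\<Sum>A\<in>(carrier_mat l k :: 'a mat set). if P \<and> mrank A = a \<and> mrank (first_rows r A) = b
       then f (mrank A) (mrank (first_rows r A)) else 0)
    = (\<Sum>A\<in>(carrier_mat l k :: 'a mat set). if mrank A = a \<and> mrank (first_rows r A) = b then f a b else 0)"
    by (rule sum.cong) (use True in auto)
  also have "\<dots> = (\<Sum>A\<in>(Dset a l k r b :: 'a mat set). f a b)"
    unfolding Dset_def by (rule sum.inter_filter[symmetric]) simp
  finally show ?thesis using True by simp
qed simp

lemma card_Dset_Suc:
  assumes r: "r \<le> l"
  defines "q \<equiv> real (card (UNIV :: 'a::{finite,field} set))"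
  shows "real (card (Dset a l (Suc k) r b :: 'a mat set)) =
     q ^ a * card (Dset a l k r b :: 'a mat set)
   + (if 0 < a then (q ^ b * q ^ (l - r) - q ^ (a - 1)) * card (Dset (a - 1) l k r b :: 'a mat set) else 0)
   + (if 0 < a \<and> 0 < b then (q ^ l - q ^ (b - 1) * q ^ (l - r))
        * card (Dset (a - 1) l k r (b - 1) :: 'a mat set) else 0)"
proof -
  let ?S = "carrier_mat l k :: 'a mat set"
  have "rank_step q l r a' b' a b =
      (if True \<and> a' = a \<and> b' = b then q ^ a' else 0)
    + (if 0 < a \<and> a' = a - 1 \<and> b' = b then q ^ b' * q ^ (l - r) - q ^ a' else 0)
    + (if (0 < a \<and> 0 < b) \<and> a' = a - 1 \<and> b' = b - 1 then q ^ l - q ^ b' * q ^ (l - r) else 0)"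
    for a' b' unfolding rank_step_def by (intro arg_cong2[where f = "(+)"] if_cong) auto
  then have "real (card (Dset a l (Suc k) r b :: 'a mat set)) =
      (\<Sum>A\<in>?S. if True \<and> mrank A = a \<and> mrank (first_rows r A) = b then q ^ mrank A else 0)
    + (\<Sum>A\<in>?S. if 0 < a \<and> mrank A = a - 1 \<and> mrank (first_rows r A) = b
        then q ^ mrank (first_rows r A) * q ^ (l - r) - q ^ mrank A else 0)
    + (\<Sum>A\<in>?S. if (0 < a \<and> 0 < b) \<and> mrank A = a - 1 \<and> mrank (first_rows r A) = b - 1
        then q ^ l - q ^ mrank (first_rows r A) * q ^ (l - r) else 0)"
    unfolding card_Dset_Suc_sum[OF r, where 'a='a, folded q_def] by (simp only: sum.distrib)
  also have "\<dots> = q ^ a * card (Dset a l k r b :: 'a mat set)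
   + (if 0 < a then (q ^ b * q ^ (l - r) - q ^ (a - 1)) * card (Dset (a - 1) l k r b :: 'a mat set) else 0)
   + (if 0 < a \<and> 0 < b then (q ^ l - q ^ (b - 1) * q ^ (l - r))
        * card (Dset (a - 1) l k r (b - 1) :: 'a mat set) else 0)"
    unfolding sum_Dset_profile[where f = "\<lambda>a' b'. q ^ a'"]
      sum_Dset_profile[where f = "\<lambda>a' b'. q ^ b' * q ^ (l - r) - q ^ a'"]
      sum_Dset_profile[where f = "\<lambda>a' b'. q ^ l - q ^ b' * q ^ (l - r)"] by simp
  finally show ?thesis .
qed

section \<open>Gaussian arithmetic\<close>

lemma qfact_Suc: "qfact q (Suc n) = qfact q n * (real q ^ Suc n - 1)"
  unfolding qfact_def by (simp add: prod.nat_ivl_Suc' mult.commute)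

lemma qfact_0 [simp]: "qfact q 0 = 1"
  by (simp add: qfact_def)

lemma qfact_pos: "2 \<le> q \<Longrightarrow> 0 < qfact q n"
  unfolding qfact_def by (intro prod_pos) (simp add: one_less_power)

lemma qbinom_0 [simp]: "2 \<le> q \<Longrightarrow> qbinom q n 0 = 1"
  using qfact_pos[of q n] by (simp add: qbinom_def)

lemma qbinom_Suc:
  assumes q: "2 \<le> q"
  shows "real q ^ k * (real q ^ Suc k - 1) * qbinom q n (Suc k) = (real q ^ n - real q ^ k) * qbinom q n k"
proof (cases "k < n")
  case True
  let ?Q = "real q"
  obtain m where n: "n = k + Suc m" using True less_iff_Suc_add by auto
  have Q: "1 < ?Q" using q by simp
  have "?Q ^ Suc k - 1 \<noteq> 0" "?Q ^ Suc m - 1 \<noteq> 0"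
    using one_less_power[OF Q, of "Suc k"] one_less_power[OF Q, of "Suc m"] by simp_all
  moreover have "qfact q k \<noteq> 0" "qfact q m \<noteq> 0"
    using qfact_pos[OF q, of k] qfact_pos[OF q, of m] by simp_all
  moreover have "?Q ^ n - ?Q ^ k = ?Q ^ k * (?Q ^ Suc m - 1)"
    unfolding n power_add by (simp add: right_diff_distrib)
  moreover have "n - Suc k = m" "n - k = Suc m" "Suc k \<le> n" using n by auto
  ultimately show ?thesis
    unfolding qbinom_def by (simp add: qfact_Suc[of q k] qfact_Suc[of q m] field_simps)
qed (simp add: qbinom_def)

lemma choose_two_add: "(a + b) choose 2 = (a choose 2) + (b choose 2) + a * b"
  by (induction b) (simp_all add: numeral_2_eq_2)

text \<open>The number of linearly independent \<open>a\<close>-tuples in \<open>\<bbbF>\<^sub>q\<^sup>j\<close>.\<close>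
definition qfalling :: "nat \<Rightarrow> nat \<Rightarrow> nat \<Rightarrow> real" where
  "qfalling q j a = (\<Prod>i<a. real q ^ j - real q ^ i)"

lemma qfalling_0 [simp]: "qfalling q j 0 = 1"
  by (simp add: qfalling_def)

lemma qfalling_0_Suc [simp]: "qfalling q 0 (Suc a) = 0"
  by (simp add: qfalling_def lessThan_Suc_eq_insert_0 prod.insert)

lemma qfalling_Suc:
  "qfalling q (Suc j) (Suc a)
    = real q ^ Suc a * qfalling q j (Suc a) + real q ^ a * (real q ^ Suc a - 1) * qfalling q j a"
proof -
  let ?Q = "real q"
  have "qfalling q (Suc j) (Suc a) = (?Q ^ Suc j - 1) * (\<Prod>i<a. ?Q * (?Q ^ j - ?Q ^ i))"
    unfolding qfalling_def prod.lessThan_Suc_shift by (simp add: right_diff_distrib)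
  also have "\<dots> = (?Q ^ Suc j - 1) * (?Q ^ a * qfalling q j a)"
    by (simp add: qfalling_def prod.distrib)
  finally show ?thesis
    by (simp add: qfalling_def algebra_simps)
qed

lemma qfalling_qfact:
  "t \<le> m \<Longrightarrow> qfalling q m t * qfact q (m - t) = real q ^ (t choose 2) * qfact q m"
proof (induction t)
  case (Suc t)
  let ?Q = "real q"
  have "?Q ^ m - ?Q ^ t = ?Q ^ t * (?Q ^ (m - t) - 1)"
    using Suc.prems by (simp add: right_diff_distrib flip: power_add)
  moreover have "qfact q (m - t) = qfact q (m - Suc t) * (?Q ^ (m - t) - 1)"
    using Suc.prems qfact_Suc[of q "m - Suc t"] by (simp add: Suc_diff_Suc)
  ultimately have "qfalling q m (Suc t) * qfact q (m - Suc t) = ?Q ^ t * (qfalling q m t * qfact q (m - t))"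
    by (simp add: qfalling_def)
  moreover have "Suc t choose 2 = (t choose 2) + t" by (simp add: numeral_2_eq_2)
  ultimately show ?case
    using Suc by (simp add: power_add mult_ac)
qed (simp add: numeral_2_eq_2)

section \<open>The closed form\<close>

text \<open>The number of \<open>a\<close>-dimensional subspaces of \<open>\<bbbF>\<^sub>q\<^sup>r\<^sup>+\<^sup>n\<close> whose projection to the first
  \<open>r\<close> coordinates is \<open>b\<close>-dimensional, so that a matrix is counted by its column space and a
  surjection onto it. Only the recursion \<open>subspace_count_Suc\<close> is used below.\<close>
definition subspace_count :: "nat \<Rightarrow> nat \<Rightarrow> nat \<Rightarrow> nat \<Rightarrow> nat \<Rightarrow> real" where
  "subspace_count q r n a b =
     (if b \<le> a then real q ^ (b * (n - (a - b))) * qbinom q r b * qbinom q n (a - b) else 0)"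

lemma subspace_count_Suc_interior:
  fixes q r n b c :: nat
  assumes q: "2 \<le> q"
  defines "Q \<equiv> real q"
  shows "Q ^ (Suc b + c) * (Q ^ Suc (Suc b + c) - 1) * subspace_count q r n (Suc (Suc b + c)) (Suc b)
    = (Q ^ Suc b * Q ^ n - Q ^ (Suc b + c)) * subspace_count q r n (Suc b + c) (Suc b)
    + (Q ^ (r + n) - Q ^ b * Q ^ n) * subspace_count q r n (Suc b + c) b"
proof (cases "c < n")
  case False
  then show ?thesis
    by (cases "c = n") (simp_all add: subspace_count_def qbinom_def power_add)
next
  case True
  then obtain N where n: "n = Suc c + N" using less_iff_Suc_add by auto
  have rec_r: "Q ^ b * (Q ^ Suc b - 1) * qbinom q r (Suc b) = (Q ^ r - Q ^ b) * qbinom q r b"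
    unfolding Q_def by (rule qbinom_Suc[OF q])
  have rec_n: "Q ^ c * (Q ^ Suc c - 1) * qbinom q n (Suc c) = (Q ^ n - Q ^ c) * qbinom q n c"
    unfolding Q_def by (rule qbinom_Suc[OF q])
  have "(Q ^ Suc b * Q ^ n - Q ^ (Suc b + c)) * subspace_count q r n (Suc b + c) (Suc b)
      = Q ^ Suc b * Q ^ (Suc b * Suc N) * qbinom q r (Suc b) * ((Q ^ n - Q ^ c) * qbinom q n c)"
    by (simp add: subspace_count_def Q_def n power_add algebra_simps)
  also have "\<dots> = Q ^ Suc b * Q ^ (Suc b * Suc N) * qbinom q r (Suc b)
      * (Q ^ c * (Q ^ Suc c - 1) * qbinom q n (Suc c))"
    unfolding rec_n ..
  finally have first: "(Q ^ Suc b * Q ^ n - Q ^ (Suc b + c)) * subspace_count q r n (Suc b + c) (Suc b)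
      = Q ^ Suc b * Q ^ (Suc b * Suc N) * Q ^ c * (Q ^ Suc c - 1)
        * qbinom q r (Suc b) * qbinom q n (Suc c)"
    by (simp only: mult_ac)
  have "(Q ^ (r + n) - Q ^ b * Q ^ n) * subspace_count q r n (Suc b + c) b
      = Q ^ n * Q ^ (b * N) * qbinom q n (Suc c) * ((Q ^ r - Q ^ b) * qbinom q r b)"
    by (simp add: subspace_count_def Q_def n power_add algebra_simps)
  also have "\<dots> = Q ^ n * Q ^ (b * N) * qbinom q n (Suc c)
      * (Q ^ b * (Q ^ Suc b - 1) * qbinom q r (Suc b))"
    unfolding rec_r ..
  finally have second: "(Q ^ (r + n) - Q ^ b * Q ^ n) * subspace_count q r n (Suc b + c) b
      = Q ^ n * Q ^ (b * N) * Q ^ b * (Q ^ Suc b - 1) * qbinom q r (Suc b) * qbinom q n (Suc c)"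
    by (simp only: mult_ac)
  have top: "subspace_count q r n (Suc (Suc b + c)) (Suc b)
      = Q ^ (Suc b * N) * qbinom q r (Suc b) * qbinom q n (Suc c)"
    by (simp add: subspace_count_def Q_def n)
  show ?thesis
    unfolding first second top by (simp add: n power_add algebra_simps)
qed

lemma subspace_count_Suc:
  assumes q: "2 \<le> q"
  defines "Q \<equiv> real q"
  shows "Q ^ a * (Q ^ Suc a - 1) * subspace_count q r n (Suc a) b
    = (Q ^ b * Q ^ n - Q ^ a) * subspace_count q r n a b
    + (if 0 < b then (Q ^ (r + n) - Q ^ (b - 1) * Q ^ n) * subspace_count q r n a (b - 1) else 0)"
proof -
  consider "b = 0" | "0 < b" "b \<le> a" | "b = Suc a" | "Suc a < b" by linarith
  then show ?thesis
  proof cases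
    case 1
    then show ?thesis
      using qbinom_Suc[OF q, of a n] by (simp add: subspace_count_def Q_def q)
  next
    case 2
    obtain b' where b': "b = Suc b'" using 2 gr0_implies_Suc by blast
    obtain c where "a = b + c" using 2 le_Suc_ex by blast
    then show ?thesis
      using subspace_count_Suc_interior[OF q, of b' c r n] by (simp add: Q_def b')
  next
    case 3
    have "Q ^ a * (Q ^ Suc a - 1) * subspace_count q r n (Suc a) b
        = Q ^ n * Q ^ (a * n) * (Q ^ a * (Q ^ Suc a - 1) * qbinom q r (Suc a))"
      using 3 by (simp add: subspace_count_def Q_def q power_add mult_ac)
    also have "\<dots> = Q ^ n * Q ^ (a * n) * ((Q ^ r - Q ^ a) * qbinom q r a)"
      unfolding Q_def qbinom_Suc[OF q] ..
    also have "\<dots> = (Q ^ b * Q ^ n - Q ^ a) * subspace_count q r n a b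
        + (if 0 < b then (Q ^ (r + n) - Q ^ (b - 1) * Q ^ n) * subspace_count q r n a (b - 1) else 0)"
      using 3 by (simp add: subspace_count_def Q_def q power_add algebra_simps)
    finally show ?thesis .
  next
    case 4
    then show ?thesis by (simp add: subspace_count_def)
  qed
qed

lemma card_Dset_0:
  "card (Dset a l 0 r b :: 'a::{finite,field} mat set) = (if a = 0 \<and> b = 0 then 1 else 0)"
proof -
  have "carrier_mat l 0 = {0\<^sub>m l 0 :: 'a mat}" by (auto intro!: eq_matI)
  moreover have "first_rows r (0\<^sub>m l 0 :: 'a mat) = 0\<^sub>m r 0"
    by (auto simp: first_rows_def intro!: eq_matI)
  moreover have "mrank (0\<^sub>m k 0 :: 'a mat) = 0" for k
    unfolding mrank_def by (simp add: vec_space.rank_0I)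
  ultimately have "Dset a l 0 r b = (if a = 0 \<and> b = 0 then {0\<^sub>m l 0 :: 'a mat} else {})"
    by (auto simp: Dset_def)
  then show ?thesis by simp
qed

lemma card_Dset_closed_form:
  assumes r: "r \<le> l"
  defines "q \<equiv> card (UNIV :: 'a::{finite,field} set)"
  shows "real (card (Dset a l j r b :: 'a mat set)) = qfalling q j a * subspace_count q r (l - r) a b"
proof (induction j arbitrary: a b)
  case 0
  have "2 \<le> q" using card_UNIV_field_ge_2[where 'a='a] by (simp add: q_def)
  then show ?case by (cases a) (simp_all add: card_Dset_0 subspace_count_def)
next
  case (Suc j)
  define n where "n = l - r"
  let ?Q = "real q"
  have q: "2 \<le> q" using card_UNIV_field_ge_2[where 'a='a] by (simp add: q_def)
  have IH: "real (card (Dset a' l j r b' :: 'a mat set)) = qfalling q j a' * subspace_count q r n a' b'"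
    for a' b' using Suc.IH by (simp add: n_def)
  have Ql: "?Q ^ l = ?Q ^ (r + n)" using r by (simp add: n_def)
  note rec = card_Dset_Suc[OF r, where 'a='a and k=j, folded q_def n_def, unfolded IH Ql]
  show ?case
  proof (cases a)
    case 0
    then show ?thesis using rec by (simp add: n_def)
  next
    case (Suc a0)
    have "real (card (Dset a l (Suc j) r b :: 'a mat set))
      = ?Q ^ Suc a0 * (qfalling q j (Suc a0) * subspace_count q r n (Suc a0) b)
      + qfalling q j a0 * ((?Q ^ b * ?Q ^ n - ?Q ^ a0) * subspace_count q r n a0 b
        + (if 0 < b then (?Q ^ (r + n) - ?Q ^ (b - 1) * ?Q ^ n) * subspace_count q r n a0 (b - 1) else 0))"
      using rec Suc by (simp add: algebra_simps)
    also have "\<dots> = ?Q ^ Suc a0 * (qfalling q j (Suc a0) * subspace_count q r n (Suc a0) b)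
      + qfalling q j a0 * (?Q ^ a0 * (?Q ^ Suc a0 - 1) * subspace_count q r n (Suc a0) b)"
      by (simp only: subspace_count_Suc[OF q])
    also have "\<dots> = qfalling q (Suc j) (Suc a0) * subspace_count q r n (Suc a0) b"
      by (simp add: qfalling_Suc algebra_simps)
    finally show ?thesis using Suc by (simp add: n_def)
  qed
qed

lemma qfalling_mult_subspace_count:
  assumes q: "2 \<le> q" and st: "s \<le> t" and tm: "t \<le> m"
  shows "qfalling q m t * subspace_count q r n t s
    = qfact q m / qfact q (m - t) * real q ^ (s * n) * real q ^ (s choose 2)
      * real q ^ ((t - s) choose 2) * qbinom q r s * qbinom q n (t - s)"
proof (cases "t - s \<le> n")
  case False
  then show ?thesis using st by (simp add: subspace_count_def qbinom_def)
next
  case True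
  define c where "c = t - s"
  have t: "t = s + c" and cn: "c \<le> n" using st True by (simp_all add: c_def)
  have sn: "s * (n - c) + s * c = s * n" using cn by (simp add: diff_mult_distrib2)
  have "qfalling q m t = real q ^ (t choose 2) * qfact q m / qfact q (m - t)"
    using qfalling_qfact[OF tm, of q] qfact_pos[OF q, of "m - t"] by (simp add: field_simps)
  moreover have "(t choose 2) + s * (n - c) = s * n + (s choose 2) + (c choose 2)"
    using sn unfolding t choose_two_add by linarith
  ultimately show ?thesis
    using st by (simp add: subspace_count_def c_def[symmetric] power_add[symmetric] mult_ac add_ac)
qed

theorem mainTheorem13:
  fixes r s t l m :: nat
  assumes "1 \<le> t" "t \<le> l" "l \<le> m" "1 \<le> r" "r \<le> l" "1 \<le> s" "s \<le> t"
  defines "q \<equiv> card (UNIV :: 'a set)"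
  shows "real (card (Dset t l m r s :: 'a::{finite,field} mat set)) =
    qfact q m / qfact q (m - t) * real q ^ (s * (l - r)) * real q ^ (s choose 2)
      * real q ^ ((t - s) choose 2) * qbinom q r s * qbinom q (l - r) (t - s)"
proof -
  have q: "2 \<le> q" using card_UNIV_field_ge_2[where 'a='a] by (simp add: q_def)
  have "real (card (Dset t l m r s :: 'a mat set)) = qfalling q m t * subspace_count q r (l - r) t s"
    unfolding q_def by (rule card_Dset_closed_form[OF \<open>r \<le> l\<close>])
  also have "\<dots> = qfact q m / qfact q (m - t) * real q ^ (s * (l - r)) * real q ^ (s choose 2)
      * real q ^ ((t - s) choose 2) * qbinom q r s * qbinom q (l - r) (t - s)"
    using assms by (intro qfalling_mult_subspace_count[OF q]) simp_all
  finally show ?thesis .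
qed

end
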